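(* For positive integers $k\le n$, $\theta_k(\ell_1,\ell_1)=1$; that is, $\max\{\|C_k(B)\|_1 : B\in\mathbb{C}^{n\times n},\ \|\mathrm{col}_i(B)\|_1=1,\ i=1,\ldots,n\}=1$.
   Context: $C_k(B)$ is the $k$th compound of $B$: the $\binom nk\times\binom nk$ matrix of all $k\times k$ minors $\det B(\alpha|\beta)$, indexed by $k$-subsets $\alpha,\beta$ of $\{1,\ldots,n\}$. $\mathrm{col}_i(B)$ is the $i$th column of $B$. For vectors $\|\cdot\|_1$ is the $\ell_1$ norm; for matrices $\|\cdot\|_1$ is the operator norm induced by the vector $\ell_1$ norm. $\theta_k(\mu,\nu)$ denotes $\max\{\mu(C_k(B)): \nu(\mathrm{col}_i(B))=1\ \forall i\}$. *)

theory Defs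
  imports Complex_Main "Jordan_Normal_Form.Determinant" "Jordan_Normal_Form.DL_Submatrix"
begin

definition ksubsets :: "nat \<Rightarrow> nat \<Rightarrow> nat set set" where
  "ksubsets n k = {\<alpha>. \<alpha> \<subseteq> {0..<n} \<and> card \<alpha> = k}"

text \<open>k-th compound matrix: entry (alpha, beta) is the minor det B(alpha|beta),
  rows/columns of the submatrix taken in increasing order.
  Indexed by k-subsets (as functions on pairs of sets).\<close>
definition compound :: "nat \<Rightarrow> complex mat \<Rightarrow> nat set \<Rightarrow> nat set \<Rightarrow> complex" where
  "compound k B \<alpha> \<beta> = det (submatrix B \<alpha> \<beta>)"

definition l1norm :: "'i set \<Rightarrow> ('i \<Rightarrow> complex) \<Rightarrow> real" where
  "l1norm I x = (\<Sum>i\<in>I. cmod (x i))"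

definition l1opnorm :: "'i set \<Rightarrow> ('i \<Rightarrow> 'i \<Rightarrow> complex) \<Rightarrow> real" where
  "l1opnorm I A = Sup {l1norm I (\<lambda>a. \<Sum>b\<in>I. A a b * x b) | x. l1norm I x = 1}"

definition col_l1 :: "complex mat \<Rightarrow> nat \<Rightarrow> real" where
  "col_l1 B i = (\<Sum>r<dim_row B. cmod (B $$ (r, i)))"

end

(* The l1 operator norm of a matrix is its largest column l1 norm, so it suffices to bound the
   columns of C_k(B). Fix a column index set beta = {beta_1 < ... < beta_k}. Expanding each minor
   det B(alpha|beta) by the Leibniz formula, every term has modulus prod_j |B(g j, beta_j)| with
   g = pick alpha o p, and the row selection g determines alpha (its image) and the permutation p.
   Hence the column sum over alpha is at most the sum over all maps g : [k] -> [n] of these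
   products, which factorises as prod_j ||col_(beta_j) B||_1 = 1. The identity matrix attains
   the bound, since its compound has the entry 1 at ({1..k}, {1..k}). *)
theory Submission
  imports Defs
begin

lemma l1norm_indicator:
  assumes "finite I" and "b \<in> I"
  shows "l1norm I (\<lambda>a. if a = b then 1 else 0) = 1"
  using assms unfolding l1norm_def by (simp add: if_distrib cong: if_cong)

lemma l1norm_mult_le:
  assumes "finite I" and col: "\<And>b. b \<in> I \<Longrightarrow> (\<Sum>a\<in>I. cmod (A a b)) \<le> c"
  shows "l1norm I (\<lambda>a. \<Sum>b\<in>I. A a b * x b) \<le> c * l1norm I x"
proof -
  have "l1norm I (\<lambda>a. \<Sum>b\<in>I. A a b * x b) \<le> (\<Sum>a\<in>I. \<Sum>b\<in>I. cmod (A a b) * cmod (x b))"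
    unfolding l1norm_def by (intro sum_mono order_trans[OF norm_sum]) (simp add: norm_mult)
  also have "\<dots> = (\<Sum>b\<in>I. (\<Sum>a\<in>I. cmod (A a b)) * cmod (x b))"
    by (subst sum.swap) (simp add: sum_distrib_right)
  also have "\<dots> \<le> (\<Sum>b\<in>I. c * cmod (x b))"
    by (intro sum_mono mult_right_mono col) auto
  finally show ?thesis by (simp add: l1norm_def sum_distrib_left)
qed

lemma l1opnorm_le:
  assumes "finite I" and "I \<noteq> {}" and "\<And>b. b \<in> I \<Longrightarrow> (\<Sum>a\<in>I. cmod (A a b)) \<le> c"
  shows "l1opnorm I A \<le> c"
  unfolding l1opnorm_def
proof (rule cSup_least)
  obtain b where "b \<in> I" using assms(2) by blast
  then show "{l1norm I (\<lambda>a. \<Sum>b\<in>I. A a b * x b) | x. l1norm I x = 1} \<noteq> {}"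
    using l1norm_indicator[OF assms(1)] by blast
next
  fix y assume "y \<in> {l1norm I (\<lambda>a. \<Sum>b\<in>I. A a b * x b) | x. l1norm I x = 1}"
  then obtain x where "y = l1norm I (\<lambda>a. \<Sum>b\<in>I. A a b * x b)" and "l1norm I x = 1" by blast
  then show "y \<le> c" using l1norm_mult_le[where A = A and c = c and x = x, OF assms(1,3)] by simp
qed

lemma col_sum_le_l1opnorm:
  assumes "finite I" and "b \<in> I"
  shows "(\<Sum>a\<in>I. cmod (A a b)) \<le> l1opnorm I A"
proof -
  let ?e = "\<lambda>a. if a = b then 1 else 0 :: complex"
  have "(\<Sum>a\<in>I. cmod (A a b)) = l1norm I (\<lambda>a. \<Sum>b\<in>I. A a b * ?e b)"
    using assms unfolding l1norm_def by (simp add: if_distrib cong: if_cong)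
  also have "\<dots> \<le> l1opnorm I A"
    unfolding l1opnorm_def
  proof (rule cSup_upper)
    show "l1norm I (\<lambda>a. \<Sum>b\<in>I. A a b * ?e b) \<in> {l1norm I (\<lambda>a. \<Sum>b\<in>I. A a b * x b) | x. l1norm I x = 1}"
      using l1norm_indicator[OF assms] by (intro CollectI exI[of _ ?e]) simp
    let ?c = "\<Sum>b'\<in>I. \<Sum>a\<in>I. cmod (A a b')"
    have "\<And>b'. b' \<in> I \<Longrightarrow> (\<Sum>a\<in>I. cmod (A a b')) \<le> ?c"
      using assms(1) by (intro member_le_sum sum_nonneg) auto
    then have "l1norm I (\<lambda>a. \<Sum>b\<in>I. A a b * x b) \<le> ?c" if "l1norm I x = 1" for x
      using l1norm_mult_le[where A = A and c = ?c and x = x, OF assms(1)] that by simp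
    then show "bdd_above {l1norm I (\<lambda>a. \<Sum>b\<in>I. A a b * x b) | x. l1norm I x = 1}"
      by (intro bdd_aboveI[where M = ?c]) auto
  qed
  finally show ?thesis .
qed

lemma inj_on_pick: "inj_on (pick S) {..<card S}"
  by (rule strict_mono_on_imp_inj_on) (auto intro: strict_mono_onI pick_mono_le)

lemma pick_image:
  assumes "finite S"
  shows "pick S ` {..<card S} = S"
proof (rule card_subset_eq[OF assms])
  show "pick S ` {..<card S} \<subseteq> S" using pick_in_set_le by auto
  show "card (pick S ` {..<card S}) = card S" by (simp add: card_image[OF inj_on_pick])
qed

lemma pick_atLeast0LessThan:
  assumes "i < k"
  shows "pick {0..<k} i = i"
proof -
  have "{a \<in> {0..<k}. a < i} = {0..<i}" using assms by auto
  then show ?thesis using pick_card_in_set[of i "{0..<k}"] assms by simp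
qed

lemma finite_ksubsets: "finite (ksubsets n k)"
  unfolding ksubsets_def by (rule finite_subset[of _ "Pow {0..<n}"]) auto

lemma atLeast0LessThan_in_ksubsets: "k \<le> n \<Longrightarrow> {0..<k} \<in> ksubsets n k"
  unfolding ksubsets_def by auto

lemma ksubsetsD:
  assumes "\<alpha> \<in> ksubsets n k"
  shows "finite \<alpha>" and "card \<alpha> = k" and "{i. i < n \<and> i \<in> \<alpha>} = \<alpha>" and "\<And>j. j < k \<Longrightarrow> pick \<alpha> j < n"
proof -
  show "finite \<alpha>" and "card \<alpha> = k" and "{i. i < n \<and> i \<in> \<alpha>} = \<alpha>"
    using assms finite_subset[of \<alpha> "{0..<n}"] unfolding ksubsets_def by auto
  then show "\<And>j. j < k \<Longrightarrow> pick \<alpha> j < n"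
    using pick_in_set_le[of _ \<alpha>] by blast
qed

lemma submatrix_ksubsets:
  assumes "B \<in> carrier_mat n n" and "\<alpha> \<in> ksubsets n k" and "\<beta> \<in> ksubsets n k"
  shows "submatrix B \<alpha> \<beta> \<in> carrier_mat k k"
    and "\<And>i j. i < k \<Longrightarrow> j < k \<Longrightarrow> submatrix B \<alpha> \<beta> $$ (i, j) = B $$ (pick \<alpha> i, pick \<beta> j)"
  using assms ksubsetsD(2,3)[OF assms(2)] ksubsetsD(2,3)[OF assms(3)]
  by (auto simp: submatrix_def)

lemma compound_eq_sum_permutes:
  assumes "B \<in> carrier_mat n n" and "\<alpha> \<in> ksubsets n k" and "\<beta> \<in> ksubsets n k"
  shows "compound k B \<alpha> \<beta> =
    (\<Sum>p\<in>{p. p permutes {0..<k}}. signof p * (\<Prod>j=0..<k. B $$ (pick \<alpha> (p j), pick \<beta> j)))"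
proof -
  let ?M = "submatrix B \<alpha> \<beta>"
  have M: "?M \<in> carrier_mat k k" by (rule submatrix_ksubsets(1)[OF assms])
  have "compound k B \<alpha> \<beta> = det (transpose_mat ?M)"
    unfolding compound_def det_transpose[OF M] ..
  also have "\<dots> = (\<Sum>p\<in>{p. p permutes {0..<k}}. signof p * (\<Prod>j=0..<k. ?M $$ (p j, j)))"
    using M by (subst det_def'[of _ k]) auto
  also have "\<dots> = (\<Sum>p\<in>{p. p permutes {0..<k}}. signof p * (\<Prod>j=0..<k. B $$ (pick \<alpha> (p j), pick \<beta> j)))"
    using submatrix_ksubsets(2)[OF assms] permutes_nat_less
    by (intro sum.cong prod.cong refl arg_cong2[where f = "(*)"]) auto
  finally show ?thesis .
qed

lemma inj_on_pick_comp_permutes: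
  "inj_on (\<lambda>(\<alpha>, p). restrict (pick \<alpha> \<circ> p) {0..<k}) (ksubsets n k \<times> {p. p permutes {0..<k}})"
proof (rule inj_onI, clarsimp)
  fix \<alpha> p \<alpha>' p'
  assume \<alpha>: "\<alpha> \<in> ksubsets n k" and \<alpha>': "\<alpha>' \<in> ksubsets n k"
    and p: "p permutes {0..<k}" and p': "p' permutes {0..<k}"
    and eq: "restrict (pick \<alpha> \<circ> p) {0..<k} = restrict (pick \<alpha>' \<circ> p') {0..<k}"
  have image: "(pick A \<circ> q) ` {0..<k} = A" if "A \<in> ksubsets n k" and "q permutes {0..<k}" for A q
  proof -
    have "(pick A \<circ> q) ` {0..<k} = pick A ` (q ` {0..<k})" by (rule image_comp[symmetric])
    also have "\<dots> = pick A ` {..<card A}"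
      using permutes_image[OF that(2)] ksubsetsD(2)[OF that(1)] by (simp add: lessThan_atLeast0)
    finally show ?thesis using pick_image[OF ksubsetsD(1)[OF that(1)]] by simp
  qed
  have "\<alpha> = restrict (pick \<alpha> \<circ> p) {0..<k} ` {0..<k}" using image[OF \<alpha> p] by simp
  also have "\<dots> = \<alpha>'" unfolding eq using image[OF \<alpha>' p'] by simp
  finally have "\<alpha> = \<alpha>'" .
  moreover have "p j = p' j" for j
  proof (cases "j < k")
    case True
    then have "pick \<alpha> (p j) = pick \<alpha> (p' j)" and "p j < k" and "p' j < k"
      using fun_cong[OF eq, of j] \<open>\<alpha> = \<alpha>'\<close> permutes_nat_less[OF p] permutes_nat_less[OF p'] by auto
    then show ?thesis
      using inj_onD[OF inj_on_pick[of \<alpha>]] ksubsetsD(2)[OF \<alpha>] by auto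
  qed (use permutes_not_in[OF p] permutes_not_in[OF p'] in auto)
  ultimately show "\<alpha> = \<alpha>' \<and> p = p'" by auto
qed

lemma sum_norm_compound_le_prod_col_l1:
  assumes B: "B \<in> carrier_mat n n" and \<beta>: "\<beta> \<in> ksubsets n k"
  shows "(\<Sum>\<alpha>\<in>ksubsets n k. cmod (compound k B \<alpha> \<beta>)) \<le> (\<Prod>j=0..<k. col_l1 B (pick \<beta> j))"
proof -
  define T where "T g = (\<Prod>j=0..<k. cmod (B $$ (g j, pick \<beta> j)))" for g
  define G where "G = (\<lambda>(\<alpha>, p). restrict (pick \<alpha> \<circ> p) {0..<k})"
  define S where "S = ksubsets n k \<times> {p. p permutes {0..<k}}"
  have fin: "finite (ksubsets n k)" "finite {p. p permutes {0..<k}}"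
    by (simp_all add: finite_ksubsets finite_permutations)
  have "(\<Sum>\<alpha>\<in>ksubsets n k. cmod (compound k B \<alpha> \<beta>))
      \<le> (\<Sum>\<alpha>\<in>ksubsets n k. \<Sum>p\<in>{p. p permutes {0..<k}}. T (G (\<alpha>, p)))"
  proof (intro sum_mono)
    fix \<alpha> assume \<alpha>: "\<alpha> \<in> ksubsets n k"
    have T_G: "T (G (\<alpha>, p)) = cmod (signof p * (\<Prod>j=0..<k. B $$ (pick \<alpha> (p j), pick \<beta> j)))" for p
    proof -
      have "T (G (\<alpha>, p)) = (\<Prod>j=0..<k. cmod (B $$ (pick \<alpha> (p j), pick \<beta> j)))"
        unfolding T_def G_def by (intro prod.cong) auto
      then show ?thesis by (simp add: norm_mult prod_norm[symmetric] sign_def)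
    qed
    show "cmod (compound k B \<alpha> \<beta>) \<le> (\<Sum>p\<in>{p. p permutes {0..<k}}. T (G (\<alpha>, p)))"
      unfolding compound_eq_sum_permutes[OF B \<alpha> \<beta>] T_G by (rule norm_sum)
  qed
  also have "\<dots> = (\<Sum>x\<in>S. T (G x))"
    unfolding S_def using fin by (subst sum.Sigma) auto
  also have "\<dots> = (\<Sum>g\<in>G ` S. T g)"
    using sum.reindex[of G S T] inj_on_pick_comp_permutes[where n = n and k = k] unfolding S_def G_def by simp
  also have "\<dots> \<le> (\<Sum>g\<in>PiE {0..<k} (\<lambda>_. {0..<n}). T g)"
  proof (rule sum_mono2)
    show "G ` S \<subseteq> PiE {0..<k} (\<lambda>_. {0..<n})"
      unfolding S_def G_def using ksubsetsD(4) permutes_nat_less by fastforce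
  qed (auto simp: T_def finite_PiE prod_nonneg)
  also have "\<dots> = (\<Prod>j=0..<k. \<Sum>r=0..<n. cmod (B $$ (r, pick \<beta> j)))"
    unfolding T_def by (rule prod_sum_PiE[symmetric]) auto
  also have "\<dots> = (\<Prod>j=0..<k. col_l1 B (pick \<beta> j))"
    using B unfolding col_l1_def by (simp add: lessThan_atLeast0)
  finally show ?thesis .
qed

lemma compound_one_mat_diag:
  assumes "k \<le> n"
  shows "compound k (1\<^sub>m n) {0..<k} {0..<k} = 1"
proof -
  have rows: "{i. i < n \<and> i \<in> {0..<k}} = {0..<k}" "{i. i < n \<and> i < k} = {0..<k}"
    using assms by auto
  have "submatrix (1\<^sub>m n) {0..<k} {0..<k} = 1\<^sub>m k"
  proof (rule eq_matI)
    fix i j assume "i < dim_row (1\<^sub>m k)" and "j < dim_col (1\<^sub>m k)"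
    then show "submatrix (1\<^sub>m n) {0..<k} {0..<k} $$ (i, j) = 1\<^sub>m k $$ (i, j)"
      using assms rows by (simp add: submatrix_index pick_atLeast0LessThan)
  qed (simp_all add: dim_submatrix rows)
  then show ?thesis unfolding compound_def by (metis det_one)
qed

lemma col_l1_one_mat: "i < n \<Longrightarrow> col_l1 (1\<^sub>m n) i = 1"
  unfolding col_l1_def by (simp add: if_distrib cong: if_cong)

theorem theorem2p5:
  fixes k n :: nat
  assumes "1 \<le> k" and "k \<le> n"
  shows "(\<forall>B \<in> carrier_mat n n. (\<forall>i<n. col_l1 B i = 1) \<longrightarrow>
            l1opnorm (ksubsets n k) (compound k B) \<le> 1)
       \<and> (\<exists>B \<in> carrier_mat n n. (\<forall>i<n. col_l1 B i = 1) \<and>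
            l1opnorm (ksubsets n k) (compound k B) = 1)"
proof -
  let ?I = "ksubsets n k" and ?D = "{0..<k}"
  note fin = finite_ksubsets[of n k]
  note D = atLeast0LessThan_in_ksubsets[OF assms(2)]
  have upper: "l1opnorm ?I (compound k B) \<le> 1"
    if B: "B \<in> carrier_mat n n" and cols: "\<forall>i<n. col_l1 B i = 1" for B
  proof (rule l1opnorm_le[OF fin])
    fix \<beta> assume \<beta>: "\<beta> \<in> ?I"
    have "(\<Prod>j=0..<k. col_l1 B (pick \<beta> j)) = 1"
      using cols ksubsetsD(4)[OF \<beta>] by simp
    then show "(\<Sum>\<alpha>\<in>?I. cmod (compound k B \<alpha> \<beta>)) \<le> 1"
      using sum_norm_compound_le_prod_col_l1[OF B \<beta>] by simp
  qed (use D in blast)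
  have "1 = cmod (compound k (1\<^sub>m n) ?D ?D)"
    by (simp add: compound_one_mat_diag[OF assms(2)])
  also have "\<dots> \<le> (\<Sum>\<alpha>\<in>?I. cmod (compound k (1\<^sub>m n) \<alpha> ?D))"
    using fin D by (intro member_le_sum) auto
  also have "\<dots> \<le> l1opnorm ?I (compound k (1\<^sub>m n))"
    by (rule col_sum_le_l1opnorm[OF fin D])
  finally have "l1opnorm ?I (compound k (1\<^sub>m n)) = 1"
    using upper[of "1\<^sub>m n"] col_l1_one_mat by fastforce
  then show ?thesis
    using upper col_l1_one_mat by (metis one_carrier_mat)
qed

end
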